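(* Let $\phi_{C}(t)=\frac{1}{\cosh t}$, $\phi_{S}(t)=\frac{t}{\sinh t}$ and $\phi_{T}(t)=\frac{\tanh t}{t}$, $t\in\mathbb{R}$; these are selfdecomposable characteristic functions. Their background driving characteristic functions $\psi_C,\psi_S,\psi_T$ (i.e. the characteristic functions of $Y(1)$, where $Y$ is the background driving L\'evy process of the corresponding law) are \[ \psi_{C}(t)=\exp[-t\tanh t],\qquad \psi_{S}(t)=\exp[1-t\coth t],\qquad \psi_{T}(t)=\exp\Big[\frac{1}{\cosh t}\cdot\frac{t}{\sinh t}-1\Big]=\exp\Big[\frac{2t}{\sinh(2t)}-1\Big], \] and they satisfy $\psi_C(t)=\psi_S(t)\,\psi_T(t)$. The probability distributions corresponding to $\psi_C$, $\psi_S$ and $\psi_T$ are infinitely divisible and have finite logarithmic moments.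
   Context: A characteristic function $\phi$ is selfdecomposable ($\phi\in SD$) if for every $0<c<1$ there is a characteristic function $\rho_c$ with $\phi(t)=\phi(ct)\rho_c(t)$ for all real $t$. A random variable $X$ has a selfdecomposable law iff there exists a unique L\'evy process $(Y(s))_{s\ge0}$, called the background driving L\'evy process (BDLP) of $X$, such that $X\overset{d}{=}\int_0^\infty e^{-s}\,dY(s)$. If $\phi$ is the characteristic function of $X$ and $\psi$ that of $Y(1)$, then $\log\phi(t)=\int_0^t \log\psi(v)\,\frac{dv}{v}$, i.e. $\psi(t)=\exp[t(\log\phi(t))']$ for $t\neq0$, $\psi(0)=1$; $\psi$ is called the background driving characteristic function of $\phi$. A distribution has finite logarithmic moment if $\mathbb{E}[\log(1+|Y(1)|)]<\infty$. *)

theory Defs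
  imports "HOL-Probability.Probability"
begin

definition is_char_fun :: "(real \<Rightarrow> complex) \<Rightarrow> bool" where
  "is_char_fun f \<longleftrightarrow> (\<exists>M. real_distribution M \<and> f = char M)"

definition selfdecomposable :: "(real \<Rightarrow> complex) \<Rightarrow> bool" where
  "selfdecomposable \<phi> \<longleftrightarrow> is_char_fun \<phi> \<and>
     (\<forall>c::real. 0 < c \<and> c < 1 \<longrightarrow>
        (\<exists>\<rho>. is_char_fun \<rho> \<and> (\<forall>t. \<phi> t = \<phi> (c * t) * \<rho> t)))"

fun conv_pow :: "real measure \<Rightarrow> nat \<Rightarrow> real measure" where
  "conv_pow N 0 = return borel 0"
| "conv_pow N (Suc n) = convolution N (conv_pow N n)"

definition infinitely_divisible :: "real measure \<Rightarrow> bool" where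
  "infinitely_divisible M \<longleftrightarrow> real_distribution M \<and>
     (\<forall>n::nat. n \<ge> 1 \<longrightarrow> (\<exists>N. real_distribution N \<and> M = conv_pow N n))"

definition finite_log_moment :: "real measure \<Rightarrow> bool" where
  "finite_log_moment M \<longleftrightarrow> integrable M (\<lambda>x. ln (1 + \<bar>x\<bar>))"

text \<open>Background driving characteristic function of a positive real-valued characteristic
  function: psi(t) = exp(t (log phi)'(t)) for t \<noteq> 0, psi(0) = 1.\<close>
definition bdcf :: "(real \<Rightarrow> real) \<Rightarrow> real \<Rightarrow> real" where
  "bdcf \<phi> t = (if t = 0 then 1 else exp (t * deriv (\<lambda>s. ln (\<phi> s)) t))"

definition phi_C :: "real \<Rightarrow> real" where
  "phi_C t = 1 / cosh t"

definition phi_S :: "real \<Rightarrow> real" where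
  "phi_S t = (if t = 0 then 1 else t / sinh t)"

definition phi_T :: "real \<Rightarrow> real" where
  "phi_T t = (if t = 0 then 1 else tanh t / t)"

end

theory Submission
  imports Defs
begin

text \<open>
  Every law below is built from the Laplace law, whose characteristic function
  \<open>1 / (1 + a t\<^sup>2)\<close> is that of a Gaussian with exponentially distributed variance, by
  operations preserving real characteristic functions: products (convolution), Bernoulli
  mixtures, scale mixtures, compound Poisson exponentials \<open>exp (r (f - 1))\<close> and pointwise
  limits. Carrying an upper bound on the second moment through these operations gives
  tightness, so that limits remain characteristic functions, and square integrability, hence
  a finite logarithmic moment.

  The Weierstrass products \<open>sinh t / t = \<Prod>(1 + t\<^sup>2/(\<pi>\<^sup>2k\<^sup>2))\<close> and
  \<open>cosh t = \<Prod>(1 + 4t\<^sup>2/(\<pi>\<^sup>2(2k-1)\<^sup>2))\<close> exhibit \<open>\<phi>\<^sub>S\<close>, \<open>\<phi>\<^sub>C\<close>, \<open>\<phi>\<^sub>T\<close> and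
  the quotients \<open>\<phi>(t)/\<phi>(ct)\<close> for \<open>\<phi>\<^sub>S\<close>, \<open>\<phi>\<^sub>C\<close> as limits of products of factors
  \<open>(1 + b t\<^sup>2)/(1 + a t\<^sup>2)\<close> with \<open>0 \<le> b \<le> a\<close>. For \<open>\<phi>\<^sub>T\<close> one has
  \<open>\<psi>\<^sub>T(t) = exp (\<phi>\<^sub>S(2t) - 1)\<close>, and integrating \<open>log \<psi>\<^sub>T(ut)/u\<close> over \<open>u \<in> [c, 1]\<close>
  shows that \<open>\<phi>\<^sub>T(t)/\<phi>\<^sub>T(ct)\<close> is compound Poisson. Differentiating the logarithm of the
  product for \<open>\<phi>\<^sub>S\<close> gives \<open>\<psi>\<^sub>S = \<Prod> exp (2 (1/(1 + t\<^sup>2/(\<pi>\<^sup>2k\<^sup>2)) - 1))\<close>, and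
  \<open>\<psi>\<^sub>C = \<psi>\<^sub>S \<psi>\<^sub>T\<close>. All three are exponentials of compound Poisson exponents, so every
  power \<open>\<psi>\<^sup>s\<close> is a characteristic function, which gives infinite divisibility.
\<close>

lemma char_uminus: "char M (- t) = cnj (char M t)"
proof -
  have "char M (- t) = (CLINT x|M. cnj (iexp (t * x)))"
    unfolding char_def by (intro Bochner_Integration.integral_cong) (auto simp: exp_cnj)
  then show ?thesis unfolding char_def by simp
qed

lemma symmetric_if_real_char:
  assumes M: "real_distribution M" and real: "\<And>t. char M t \<in> \<real>"
  shows "distr M borel uminus = M"
proof -
  interpret real_distribution M by fact
  have "char (distr M borel uminus) t = char M t" for t
  proof -
    have "char (distr M borel uminus) t = char M (- t)"
      unfolding char_def by (subst integral_distr) auto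
    then show ?thesis using real[of t] by (simp add: char_uminus Reals_cnj_iff)
  qed
  then show ?thesis
    by (intro Levy_uniqueness real_distribution_distr M) auto
qed

lemma mean_zero_if_real_char:
  assumes M: "real_distribution M" and "\<And>t. char M t \<in> \<real>"
  shows "(\<integral>x. x \<partial>M) = 0"
proof -
  interpret real_distribution M by fact
  have "(\<integral>x. x \<partial>M) = (\<integral>x. x \<partial>distr M borel uminus)"
    by (simp add: symmetric_if_real_char[OF assms])
  also have "\<dots> = - (\<integral>x. x \<partial>M)" by (subst integral_distr) auto
  finally show ?thesis by simp
qed

lemma convolution_as_sum_of_independent:
  assumes M: "real_distribution M" and N: "real_distribution N"
  defines "P \<equiv> M \<Otimes>\<^sub>M N"
  shows "fst \<in> borel_measurable P" "snd \<in> borel_measurable P"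
    and "distr P borel fst = M" "distr P borel snd = N"
    and "prob_space.indep_var P borel fst borel snd"
    and "M \<star> N = distr P borel (\<lambda>\<omega>. fst \<omega> + snd \<omega>)"
proof -
  interpret M: real_distribution M by fact
  interpret N: real_distribution N by fact
  interpret P: pair_prob_space M N ..
  have sM: "sets M = sets borel" and sN: "sets N = sets borel" by auto
  show fst: "fst \<in> borel_measurable P" and snd: "snd \<in> borel_measurable P"
    unfolding P_def
    by (auto simp: measurable_cong_sets[OF refl sM, symmetric] measurable_cong_sets[OF refl sN, symmetric])
  show dfst: "distr P borel fst = M"
  proof -
    have "distr P borel fst = distr P M fst" by (rule distr_cong) (auto simp: sM P_def)
    then show ?thesis using N.distr_pair_fst by (simp add: P_def)
  qed
  show dsnd: "distr P borel snd = N"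
  proof -
    interpret Q: pair_prob_space N M ..
    have "distr P borel snd = distr P N snd" by (rule distr_cong) (auto simp: sN P_def)
    also have "\<dots> = distr (distr (N \<Otimes>\<^sub>M M) (M \<Otimes>\<^sub>M N) (\<lambda>(x,y). (y,x))) N snd"
      using P.distr_pair_swap by (simp add: P_def)
    also have "\<dots> = distr (N \<Otimes>\<^sub>M M) N fst"
      by (subst distr_distr) (auto intro!: distr_cong simp: comp_def split_beta)
    also have "\<dots> = N" by (rule M.distr_pair_fst)
    finally show ?thesis .
  qed
  show "prob_space.indep_var P borel fst borel snd"
    unfolding P_def
  proof (subst P.indep_var_distribution_eq, intro conjI)
    show "distr (M \<Otimes>\<^sub>M N) borel fst \<Otimes>\<^sub>M distr (M \<Otimes>\<^sub>M N) borel snd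
        = distr (M \<Otimes>\<^sub>M N) (borel \<Otimes>\<^sub>M borel) (\<lambda>x. (fst x, snd x))"
      using dfst dsnd by (simp add: P_def distr_id2 sets_pair_measure_cong[OF sM sN])
  qed (use fst snd in \<open>auto simp: P_def\<close>)
  show "M \<star> N = distr P borel (\<lambda>\<omega>. fst \<omega> + snd \<omega>)"
    unfolding convolution_def P_def by (intro distr_cong) (auto simp: split_beta)
qed

lemma
  assumes M: "real_distribution M" and N: "real_distribution N"
  shows real_distribution_convolution: "real_distribution (M \<star> N)"
    and char_convolution: "char (M \<star> N) t = char M t * char N t"
proof -
  interpret M: real_distribution M by fact
  interpret N: real_distribution N by fact
  interpret P: pair_prob_space M N ..
  note conv = convolution_as_sum_of_independent[OF M N]
  show "real_distribution (M \<star> N)"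
    unfolding conv(6) by (rule P.real_distribution_distr) (use conv(1,2) in simp)
  show "char (M \<star> N) t = char M t * char N t"
    unfolding conv(6) using P.char_distr_add[OF conv(5), of t] by (simp add: conv(3,4))
qed

lemma moment2_convolution:
  assumes M: "real_distribution M" and N: "real_distribution N"
    and iM: "integrable M (\<lambda>x. x\<^sup>2)" and iN: "integrable N (\<lambda>x. x\<^sup>2)" and mean: "(\<integral>x. x \<partial>M) = 0"
  shows "integrable (M \<star> N) (\<lambda>x. x\<^sup>2)"
    and "(\<integral>x. x\<^sup>2 \<partial>(M \<star> N)) = (\<integral>x. x\<^sup>2 \<partial>M) + (\<integral>x. x\<^sup>2 \<partial>N)"
proof -
  interpret M: real_distribution M by fact
  interpret N: real_distribution N by fact
  interpret P: pair_prob_space M N ..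
  let ?P = "M \<Otimes>\<^sub>M N"
  note conv = convolution_as_sum_of_independent[OF M N]
  note [measurable] = conv(1,2)
  have k1: "integrable ?P (\<lambda>\<omega>. (fst \<omega>)\<^sup>2)" using iM
    by (subst (asm) conv(3)[symmetric]) (simp add: integrable_distr_eq)
  have k2: "integrable ?P (\<lambda>\<omega>. (snd \<omega>)\<^sup>2)" using iN
    by (subst (asm) conv(4)[symmetric]) (simp add: integrable_distr_eq)
  have "integrable M (\<lambda>x. x)" by (rule M.square_integrable_imp_integrable[OF _ iM]) simp
  then have l1: "integrable ?P fst"
    by (subst (asm) conv(3)[symmetric]) (simp add: integrable_distr_eq)
  have "integrable N (\<lambda>x. x)" by (rule N.square_integrable_imp_integrable[OF _ iN]) simp
  then have l2: "integrable ?P snd"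
    by (subst (asm) conv(4)[symmetric]) (simp add: integrable_distr_eq)
  have k3: "integrable ?P (\<lambda>\<omega>. fst \<omega> * snd \<omega>)"
    by (rule P.indep_var_integrable[OF conv(5) l1 l2])
  have "(\<integral>\<omega>. fst \<omega> * snd \<omega> \<partial>?P) = (\<integral>\<omega>. fst \<omega> \<partial>?P) * (\<integral>\<omega>. snd \<omega> \<partial>?P)"
    by (rule P.indep_var_lebesgue_integral[OF conv(5) l1 l2])
  also have "(\<integral>\<omega>. fst \<omega> \<partial>?P) = (\<integral>x. x \<partial>M)"
    by (subst conv(3)[symmetric]) (simp add: integral_distr)
  finally have e3: "(\<integral>\<omega>. fst \<omega> * snd \<omega> \<partial>?P) = 0" using mean by simp
  have e1: "(\<integral>\<omega>. (fst \<omega>)\<^sup>2 \<partial>?P) = (\<integral>x. x\<^sup>2 \<partial>M)"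
    by (subst conv(3)[symmetric]) (simp add: integral_distr)
  have e2: "(\<integral>\<omega>. (snd \<omega>)\<^sup>2 \<partial>?P) = (\<integral>x. x\<^sup>2 \<partial>N)"
    by (subst conv(4)[symmetric]) (simp add: integral_distr)
  have sq: "(\<lambda>\<omega>::real \<times> real. (fst \<omega> + snd \<omega>)\<^sup>2)
      = (\<lambda>\<omega>. (fst \<omega>)\<^sup>2 + 2 * (fst \<omega> * snd \<omega>) + (snd \<omega>)\<^sup>2)"
    by (auto simp: power2_eq_square algebra_simps)
  have "integrable ?P (\<lambda>\<omega>. (fst \<omega> + snd \<omega>)\<^sup>2)" unfolding sq using k1 k2 k3 by auto
  then show "integrable (M \<star> N) (\<lambda>x. x\<^sup>2)"
    unfolding conv(6) by (simp add: integrable_distr_eq)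
  show "(\<integral>x. x\<^sup>2 \<partial>(M \<star> N)) = (\<integral>x. x\<^sup>2 \<partial>M) + (\<integral>x. x\<^sup>2 \<partial>N)"
    unfolding conv(6) using k1 k2 k3 e1 e2 e3 by (simp add: integral_distr sq)
qed

definition cf_moment2_le :: "(real \<Rightarrow> real) \<Rightarrow> real \<Rightarrow> bool" where
  "cf_moment2_le f B \<longleftrightarrow> (\<exists>M. real_distribution M \<and> char M = (\<lambda>t. complex_of_real (f t))
      \<and> integrable M (\<lambda>x. x\<^sup>2) \<and> (\<integral>x. x\<^sup>2 \<partial>M) \<le> B)"

lemma cf_moment2_le_mono: "cf_moment2_le f B \<Longrightarrow> B \<le> C \<Longrightarrow> cf_moment2_le f C"
  unfolding cf_moment2_le_def by force

lemma cf_moment2_le_at_0: "cf_moment2_le f B \<Longrightarrow> f 0 = 1"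
  unfolding cf_moment2_le_def by (metis of_real_eq_1_iff real_distribution.char_zero)

lemma is_char_fun_if_cf_moment2_le: "cf_moment2_le f B \<Longrightarrow> is_char_fun (\<lambda>t. complex_of_real (f t))"
  unfolding cf_moment2_le_def is_char_fun_def by metis

lemma isCont_if_cf_moment2_le: "cf_moment2_le f B \<Longrightarrow> isCont f t"
  unfolding cf_moment2_le_def
proof (elim exE conjE)
  fix M assume M: "real_distribution M" "char M = (\<lambda>t. complex_of_real (f t))"
  have "isCont (\<lambda>t. Re (char M t)) t" using real_distribution.isCont_char[OF M(1)] by simp
  then show "isCont f t" using M(2) by simp
qed

lemma real_distribution_return_0: "real_distribution (return borel (0::real))"
  unfolding real_distribution_def real_distribution_axioms_def by (auto intro: prob_space_return)

lemma cf_moment2_le_one: "cf_moment2_le (\<lambda>t. 1) 0"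
proof -
  have "integrable (return borel (0::real)) (\<lambda>x. x\<^sup>2)"
    by (rule integrable_cong_AE_imp[of _ "\<lambda>x. 0"]) (auto simp: AE_return)
  then show ?thesis unfolding cf_moment2_le_def
    by (intro exI[of _ "return borel (0::real)"])
       (auto simp: real_distribution_return_0 char_def integral_return)
qed

lemma cf_moment2_le_mult:
  assumes "cf_moment2_le f B" "cf_moment2_le g C"
  shows "cf_moment2_le (\<lambda>t. f t * g t) (B + C)"
proof -
  obtain M where M: "real_distribution M" "char M = (\<lambda>t. complex_of_real (f t))"
      "integrable M (\<lambda>x. x\<^sup>2)" "(\<integral>x. x\<^sup>2 \<partial>M) \<le> B"
    using assms(1) unfolding cf_moment2_le_def by blast
  obtain N where N: "real_distribution N" "char N = (\<lambda>t. complex_of_real (g t))"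
      "integrable N (\<lambda>x. x\<^sup>2)" "(\<integral>x. x\<^sup>2 \<partial>N) \<le> C"
    using assms(2) unfolding cf_moment2_le_def by blast
  have "(\<integral>x. x \<partial>M) = 0" using M(2) by (intro mean_zero_if_real_char[OF M(1)]) simp
  then show ?thesis unfolding cf_moment2_le_def
    using moment2_convolution[OF M(1) N(1) M(3) N(3)] M N
    by (intro exI[of _ "M \<star> N"])
       (auto simp: real_distribution_convolution char_convolution)
qed

lemma cf_moment2_le_prod:
  assumes "finite A" "\<And>k. k \<in> A \<Longrightarrow> cf_moment2_le (g k) (B k)"
  shows "cf_moment2_le (\<lambda>t. \<Prod>k\<in>A. g k t) (\<Sum>k\<in>A. B k)"
  using assms
proof (induction A rule: finite_induct)
  case empty then show ?case using cf_moment2_le_one by simp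
next
  case (insert x F)
  then show ?case using cf_moment2_le_mult[of "g x" "B x"] by simp
qed

lemma cf_moment2_le_scale:
  assumes "cf_moment2_le f B"
  shows "cf_moment2_le (\<lambda>t. f (a * t)) (a\<^sup>2 * B)"
proof -
  obtain M where M: "real_distribution M" "char M = (\<lambda>t. complex_of_real (f t))"
      "integrable M (\<lambda>x. x\<^sup>2)" "(\<integral>x. x\<^sup>2 \<partial>M) \<le> B"
    using assms unfolding cf_moment2_le_def by blast
  interpret real_distribution M by fact
  let ?K = "distr M borel ((*) a)"
  have "char ?K t = complex_of_real (f (a * t))" for t
  proof -
    have "char ?K t = char M (a * t)" unfolding char_def
      by (subst integral_distr) (auto simp: mult_ac)
    then show ?thesis using M(2) by simp
  qed
  moreover have "integrable ?K (\<lambda>x. x\<^sup>2)" using M(3)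
    by (subst integrable_distr_eq) (auto simp: power_mult_distrib)
  moreover have "(\<integral>x. x\<^sup>2 \<partial>?K) = a\<^sup>2 * (\<integral>x. x\<^sup>2 \<partial>M)"
    by (subst integral_distr) (auto simp: power_mult_distrib)
  ultimately show ?thesis unfolding cf_moment2_le_def using M(4)
    by (intro exI[of _ ?K]) (auto intro!: real_distribution_distr mult_left_mono)
qed

lemma cf_moment2_le_scale_mixture:
  fixes P :: "'a measure" and h :: "'a \<Rightarrow> real"
  assumes f: "cf_moment2_le f B" and P: "prob_space P" and h[measurable]: "h \<in> borel_measurable P"
    and hi: "integrable P (\<lambda>u. (h u)\<^sup>2)"
  shows "cf_moment2_le (\<lambda>t. \<integral>u. f (t * h u) \<partial>P) (B * (\<integral>u. (h u)\<^sup>2 \<partial>P))"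
proof -
  obtain M where M: "real_distribution M" "char M = (\<lambda>t. complex_of_real (f t))"
      "integrable M (\<lambda>x. x\<^sup>2)" "(\<integral>x. x\<^sup>2 \<partial>M) \<le> B"
    using f unfolding cf_moment2_le_def by blast
  interpret M: real_distribution M by fact
  interpret P: prob_space P by fact
  interpret Q: pair_prob_space P M ..
  have [measurable_cong]: "sets M = sets borel" by auto
  have [measurable]: "f \<in> borel_measurable borel"
    using isCont_if_cf_moment2_le[OF f] by (intro borel_measurable_continuous_onI continuous_at_imp_continuous_on) auto
  let ?Q = "P \<Otimes>\<^sub>M M"
  let ?g = "\<lambda>(u, x). h u * x"
  let ?K = "distr ?Q borel ?g"
  have char_K: "char ?K t = complex_of_real (\<integral>u. f (t * h u) \<partial>P)" for t
  proof -
    have int: "integrable ?Q (\<lambda>z. iexp (t * ?g z))"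
      by (rule Q.integrable_const_bound[where B=1]) auto
    have "char ?K t = (\<integral>z. iexp (t * ?g z) \<partial>?Q)" unfolding char_def
      by (subst integral_distr) auto
    also have "\<dots> = (\<integral>u. char M (t * h u) \<partial>P)"
      unfolding Q.integral_fst'[OF int, symmetric] char_def by (simp add: mult.assoc)
    finally show ?thesis using M(2) by simp
  qed
  have sq: "(\<lambda>z. (?g z)\<^sup>2) = (\<lambda>(u, x). (h u)\<^sup>2 * x\<^sup>2)" by (auto simp: power_mult_distrib)
  have intQ: "integrable ?Q (\<lambda>(u, x). (h u)\<^sup>2 * x\<^sup>2)"
    by (rule Q.Fubini_integrable) (use hi M(3) in simp_all)
  have "integrable ?K (\<lambda>x. x\<^sup>2)"
    by (subst integrable_distr_eq) (use intQ sq in auto)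
  moreover have "(\<integral>x. x\<^sup>2 \<partial>?K) = (\<integral>u. (h u)\<^sup>2 \<partial>P) * (\<integral>x. x\<^sup>2 \<partial>M)"
  proof -
    have "(\<integral>x. x\<^sup>2 \<partial>?K) = (\<integral>z. (\<lambda>(u, x). (h u)\<^sup>2 * x\<^sup>2) z \<partial>?Q)"
      by (subst integral_distr) (auto simp: sq)
    also have "\<dots> = (\<integral>u. (\<integral>x. (h u)\<^sup>2 * x\<^sup>2 \<partial>M) \<partial>P)"
      using Q.integral_fst'[OF intQ] by simp
    finally show ?thesis by simp
  qed
  moreover have "(\<integral>u. (h u)\<^sup>2 \<partial>P) * (\<integral>x. x\<^sup>2 \<partial>M) \<le> B * (\<integral>u. (h u)\<^sup>2 \<partial>P)"
    using mult_left_mono[OF M(4), of "\<integral>u. (h u)\<^sup>2 \<partial>P"] by (simp add: mult.commute)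
  ultimately show ?thesis unfolding cf_moment2_le_def
    using Q.real_distribution_distr[of ?g] char_K by (intro exI[of _ ?K]) auto
qed

lemma cf_moment2_le_bernoulli_mixture:
  assumes f: "cf_moment2_le f B" and q: "0 \<le> q" "q \<le> 1"
  shows "cf_moment2_le (\<lambda>t. (1 - q) + q * f t) (q * B)"
proof -
  let ?P = "measure_pmf (bernoulli_pmf q)"
  let ?h = "\<lambda>b::bool. if b then (1::real) else 0"
  have "cf_moment2_le (\<lambda>t. \<integral>u. f (t * ?h u) \<partial>?P) (B * (\<integral>u. (?h u)\<^sup>2 \<partial>?P))"
    by (rule cf_moment2_le_scale_mixture[OF f])
       (auto simp: prob_space_measure_pmf integrable_measure_pmf_finite)
  then show ?thesis using q cf_moment2_le_at_0[OF f] by (simp add: algebra_simps)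
qed

lemma tight_if_moment2_bounded:
  assumes M: "\<And>n. real_distribution (M n)"
    and int: "\<And>n. integrable (M n) (\<lambda>x. x\<^sup>2)" and bound: "\<And>n. (\<integral>x. x\<^sup>2 \<partial>M n) \<le> B"
  shows "tight M"
  unfolding tight_def
proof (intro conjI allI impI)
  show "real_distribution (M n)" for n by (rule M)
  fix \<epsilon> :: real assume e: "\<epsilon> > 0"
  have "0 \<le> (\<integral>x. x\<^sup>2 \<partial>M 0)" by (rule integral_nonneg_AE) simp
  then have B: "0 \<le> B" using bound[of 0] by linarith
  define a where "a = sqrt (B / \<epsilon>) + 1"
  have a: "0 < a" "B / a\<^sup>2 < \<epsilon>"
  proof -
    have "0 \<le> sqrt (B / \<epsilon>)" using B e by simp
    then show "0 < a" unfolding a_def by linarith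
    have "(sqrt (B / \<epsilon>))\<^sup>2 < a\<^sup>2"
      using B e unfolding a_def by (intro power_strict_mono) auto
    then show "B / a\<^sup>2 < \<epsilon>" using B e \<open>0 < a\<close> by (simp add: field_simps)
  qed
  have "1 - \<epsilon> < measure (M n) {-a<..a}" for n
  proof -
    interpret real_distribution "M n" by (rule M)
    have "measure (M n) {x\<in>space (M n). a\<^sup>2 \<le> x\<^sup>2} \<le> (\<integral>x. x\<^sup>2 \<partial>M n) / a\<^sup>2"
      by (rule integral_Markov_inequality_measure[OF int]) (use a in auto)
    also have "\<dots> \<le> B / a\<^sup>2" using bound[of n] by (simp add: divide_right_mono)
    finally have tail: "prob {x. a\<^sup>2 \<le> x\<^sup>2} \<le> B / a\<^sup>2" by simp
    have "UNIV - {x. a\<^sup>2 \<le> x\<^sup>2} \<subseteq> {-a<..a}"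
    proof
      fix x assume "x \<in> UNIV - {x. a\<^sup>2 \<le> x\<^sup>2}"
      then have "\<bar>x\<bar> < a" using a(1) by (metis Diff_iff abs_le_square_iff abs_of_pos mem_Collect_eq not_le)
      then show "x \<in> {-a<..a}" by auto
    qed
    then have "prob (UNIV - {x. a\<^sup>2 \<le> x\<^sup>2}) \<le> prob {-a<..a}" by (intro finite_measure_mono) auto
    moreover have "prob (UNIV - {x. a\<^sup>2 \<le> x\<^sup>2}) = 1 - prob {x. a\<^sup>2 \<le> x\<^sup>2}"
      using prob_compl[of "{x. a\<^sup>2 \<le> x\<^sup>2}"] by simp
    ultimately show ?thesis using tail a(2) by linarith
  qed
  then show "\<exists>a b. a < b \<and> (\<forall>n. 1 - \<epsilon> < measure (M n) {a<..b})"
    using a(1) by (intro exI[of _ "-a"] exI[of _ a]) auto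
qed

lemma moment2_le_if_weak_conv:
  assumes M: "\<And>n. real_distribution (M n)" and M': "real_distribution M'" and conv: "weak_conv_m M M'"
    and int: "\<And>n. integrable (M n) (\<lambda>x. x\<^sup>2)" and bound: "\<And>n. (\<integral>x. x\<^sup>2 \<partial>M n) \<le> B"
  shows "integrable M' (\<lambda>x. x\<^sup>2)" "(\<integral>x. x\<^sup>2 \<partial>M') \<le> B"
proof -
  interpret M': real_distribution M' by fact
  define trunc where "trunc = (\<lambda>(K::nat) (x::real). min (x\<^sup>2) (real K))"
  have int_trunc: "integrable N (trunc K)" if "real_distribution N" for N K
  proof -
    interpret real_distribution N by fact
    show ?thesis by (rule integrable_const_bound[where B="real K"]) (auto simp: trunc_def)
  qed
  have trunc_le: "(\<integral>x. trunc K x \<partial>M') \<le> B" for K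
  proof (rule LIMSEQ_le_const2)
    show "(\<lambda>n. \<integral>x. trunc K x \<partial>M n) \<longlonglongrightarrow> (\<integral>x. trunc K x \<partial>M')"
      by (rule weak_conv_imp_integral_bdd_continuous_conv[OF M M' conv, where B="real K"])
         (auto simp: trunc_def intro!: continuous_intros)
    show "\<exists>N. \<forall>n\<ge>N. (\<integral>x. trunc K x \<partial>M n) \<le> B"
    proof (intro exI allI impI)
      fix n
      have "(\<integral>x. trunc K x \<partial>M n) \<le> (\<integral>x. x\<^sup>2 \<partial>M n)"
        by (rule integral_mono[OF int_trunc[OF M] int]) (auto simp: trunc_def)
      then show "(\<integral>x. trunc K x \<partial>M n) \<le> B" using bound[of n] by simp
    qed
  qed
  have "incseq (\<lambda>K. \<integral>x. trunc K x \<partial>M')"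
    by (intro monoI integral_mono int_trunc[OF M']) (auto simp: trunc_def)
  then obtain L where L: "(\<lambda>K. \<integral>x. trunc K x \<partial>M') \<longlonglongrightarrow> L"
    using incseq_convergent trunc_le by blast
  have "(\<lambda>K. trunc K x) \<longlonglongrightarrow> x\<^sup>2" for x
  proof (rule tendsto_eventually)
    obtain K0 :: nat where "x\<^sup>2 \<le> real K0" using real_arch_simple by blast
    then show "\<forall>\<^sub>F K in sequentially. trunc K x = x\<^sup>2"
      by (intro eventually_sequentiallyI[of K0]) (auto simp: trunc_def)
  qed
  then have "integrable M' (\<lambda>x. x\<^sup>2) \<and> (\<integral>x. x\<^sup>2 \<partial>M') = L"
    by (intro conjI integral_monotone_convergence_nonneg[OF int_trunc[OF M'] _ _ _ L])
       (auto simp: trunc_def mono_def)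
  then show "integrable M' (\<lambda>x. x\<^sup>2)" "(\<integral>x. x\<^sup>2 \<partial>M') \<le> B"
    using LIMSEQ_le_const2[OF L] trunc_le by auto
qed

lemma cf_moment2_le_limit:
  assumes f: "\<And>n. cf_moment2_le (fs n) B" and lim: "\<And>t. (\<lambda>n. fs n t) \<longlonglongrightarrow> f t"
  shows "cf_moment2_le f B"
proof -
  obtain M where M: "\<And>n. real_distribution (M n)" "\<And>n. char (M n) = (\<lambda>t. complex_of_real (fs n t))"
     "\<And>n. integrable (M n) (\<lambda>x. x\<^sup>2)" "\<And>n. (\<integral>x. x\<^sup>2 \<partial>M n) \<le> B"
    using f unfolding cf_moment2_le_def by metis
  have "tight M" by (rule tight_if_moment2_bounded[OF M(1,3,4)])
  from tight_imp_convergent_subsubsequence[OF this strict_mono_id]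
  obtain r M' where r: "strict_mono (r :: nat \<Rightarrow> nat)" and M': "real_distribution M'"
      and "weak_conv_m (M \<circ> id \<circ> r) M'"
    by blast
  then have conv: "weak_conv_m (M \<circ> r) M'" by (simp only: comp_id)
  have Mr: "\<And>n. real_distribution ((M \<circ> r) n)" using M(1) by simp
  have "char M' = (\<lambda>t. complex_of_real (f t))"
  proof
    fix t
    have "(\<lambda>n. char ((M \<circ> r) n) t) \<longlonglongrightarrow> char M' t" by (rule levy_continuity1[OF Mr M' conv])
    moreover have "(\<lambda>n. char ((M \<circ> r) n) t) \<longlonglongrightarrow> complex_of_real (f t)"
      using LIMSEQ_subseq_LIMSEQ[OF lim r, of t] M(2) by (simp add: comp_def tendsto_of_real)
    ultimately show "char M' t = complex_of_real (f t)" by (rule LIMSEQ_unique)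
  qed
  moreover have "integrable M' (\<lambda>x. x\<^sup>2)" "(\<integral>x. x\<^sup>2 \<partial>M') \<le> B"
    using moment2_le_if_weak_conv[OF Mr M' conv, where B=B] M(3,4) by simp_all
  ultimately show ?thesis unfolding cf_moment2_le_def using M' by blast
qed

lemma cf_moment2_le_power: "cf_moment2_le f B \<Longrightarrow> cf_moment2_le (\<lambda>t. f t ^ n) (real n * B)"
proof (induction n)
  case 0 then show ?case using cf_moment2_le_one by simp
next
  case (Suc n)
  from cf_moment2_le_mult[OF Suc.prems Suc.IH[OF Suc.prems]] show ?case by (simp add: algebra_simps)
qed

lemma cf_moment2_le_compound_poisson:
  assumes f: "cf_moment2_le f B" and l: "0 \<le> l"
  shows "cf_moment2_le (\<lambda>t. exp (l * (f t - 1))) (l * B)"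
proof -
  obtain N :: nat where "l < real N" using reals_Archimedean2 by blast
  then have N: "0 < real (n + N)" for n using l by linarith
  define p where "p n = l / real (n + N)" for n
  have p: "0 \<le> p n" "p n \<le> 1" for n
    using N[of n] l \<open>l < real N\<close> unfolding p_def by (auto simp: field_simps)
  have "cf_moment2_le (\<lambda>t. ((1 - p n) + p n * f t) ^ (n + N)) (real (n + N) * (p n * B))" for n
    by (rule cf_moment2_le_power[OF cf_moment2_le_bernoulli_mixture[OF f p]])
  moreover have "real (n + N) * (p n * B) = l * B" for n
    using N[of n] unfolding p_def by simp
  ultimately have "cf_moment2_le (\<lambda>t. ((1 - p n) + p n * f t) ^ (n + N)) (l * B)" for n
    by metis
  moreover have "(\<lambda>n. ((1 - p n) + p n * f t) ^ (n + N)) \<longlonglongrightarrow> exp (l * (f t - 1))" for t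
  proof -
    have "(\<lambda>n. (1 + l * (f t - 1) / real (n + N)) ^ (n + N)) \<longlonglongrightarrow> exp (l * (f t - 1))"
      by (rule LIMSEQ_ignore_initial_segment[OF tendsto_exp_limit_sequentially])
    moreover have "1 + l * (x - 1) / m = (1 - l / m) + l / m * x" if "0 < m" for m x :: real
      using that by (simp add: field_simps)
    then have "1 + l * (f t - 1) / real (n + N) = (1 - p n) + p n * f t" for n
      using N[of n] unfolding p_def by blast
    ultimately show ?thesis by (simp only:)
  qed
  ultimately show ?thesis by (rule cf_moment2_le_limit)
qed

lemma cf_moment2_le_std_normal: "cf_moment2_le (\<lambda>t. exp (- (t\<^sup>2) / 2)) 1"
proof -
  have "integrable std_normal_distribution (\<lambda>x. x ^ (2 * 1))"
    "(\<integral>x. x ^ (2 * 1) \<partial>std_normal_distribution) = fact (2 * 1) / (2 ^ 1 * fact 1)"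
    using std_normal_distribution_even_moments[of 1] by auto
  then show ?thesis unfolding cf_moment2_le_def
    using real_dist_normal_dist char_std_normal_distribution
    by (intro exI[of _ std_normal_distribution]) (simp add: numeral_2_eq_2)
qed

lemma exponential_moment:
  assumes "0 < l"
  shows "has_bochner_integral lborel (\<lambda>x. exponential_density l x * x ^ i) (fact i / l ^ i)"
proof (rule has_bochner_integral_nn_integral)
  show "(\<integral>\<^sup>+ x. ennreal (exponential_density l x * x ^ i) \<partial>lborel) = ennreal (fact i / l ^ i)"
    using nn_integral_erlang_ith_moment[OF assms, of 0 i] by simp
qed (use assms in \<open>auto simp: exponential_density_def\<close>)

lemma laplace_transform_exponential:
  assumes "0 \<le> s"
  shows "(\<integral>u. exp (- s * \<bar>u\<bar>) \<partial>density lborel (exponential_density 1)) = 1 / (1 + s)"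
proof -
  have "exponential_density 1 u * exp (- s * \<bar>u\<bar>) = exponential_density (1 + s) u * u ^ 0 / (1 + s)" for u
  proof (cases "u < 0")
    case False
    have "exp (- u) * exp (- s * u) = exp (- u * (1 + s))" by (simp add: exp_add[symmetric] algebra_simps)
    then show ?thesis using False assms by (simp add: exponential_density_def)
  qed (simp add: exponential_density_def)
  then have "(\<integral>u. exp (- s * \<bar>u\<bar>) \<partial>density lborel (exponential_density 1))
      = (\<integral>u. exponential_density (1 + s) u * u ^ 0 / (1 + s) \<partial>lborel)"
    by (subst integral_density) (auto simp: exponential_density_def)
  also have "\<dots> = 1 / (1 + s)"
    using has_bochner_integral_integral_eq[OF exponential_moment[of "1 + s" 0]] assms by simp
  finally show ?thesis .
qed

lemma cf_moment2_le_laplace: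
  assumes a: "0 \<le> a"
  shows "cf_moment2_le (\<lambda>t. 1 / (1 + a * t\<^sup>2)) (2 * a)"
proof -
  let ?P = "density lborel (exponential_density 1)"
  let ?h = "\<lambda>u. sqrt (2 * a * \<bar>u\<bar>)"
  have hsq: "(?h u)\<^sup>2 = 2 * a * \<bar>u\<bar>" for u using a by simp
  have "(\<lambda>u. exponential_density 1 u * \<bar>u\<bar>) = (\<lambda>u. exponential_density 1 u * u ^ 1)"
    by (auto simp: exponential_density_def)
  then have "has_bochner_integral lborel (\<lambda>u. exponential_density 1 u * \<bar>u\<bar>) 1"
    using exponential_moment[of 1 1] by (simp only:) simp
  then have mean: "integrable lborel (\<lambda>u. exponential_density 1 u * \<bar>u\<bar>)"
    "(\<integral>u. exponential_density 1 u * \<bar>u\<bar> \<partial>lborel) = 1"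
    by (simp_all add: has_bochner_integral_iff)
  have nonneg: "AE u in lborel. 0 \<le> exponential_density 1 u"
    by (simp add: exponential_density_def)
  have int: "integrable ?P (\<lambda>u. (?h u)\<^sup>2)" and var: "(\<integral>u. (?h u)\<^sup>2 \<partial>?P) = 2 * a"
    unfolding hsq using mean
    by (simp_all add: integrable_density[OF _ _ nonneg] integral_density[OF _ _ nonneg])
  have "cf_moment2_le (\<lambda>t. \<integral>u. exp (- ((t * ?h u)\<^sup>2) / 2) \<partial>?P) (1 * (\<integral>u. (?h u)\<^sup>2 \<partial>?P))"
    by (rule cf_moment2_le_scale_mixture[OF cf_moment2_le_std_normal prob_space_exponential_density _ int])
       simp_all
  then have "cf_moment2_le (\<lambda>t. \<integral>u. exp (- ((t * ?h u)\<^sup>2) / 2) \<partial>?P) (2 * a)"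
    by (simp only: var mult_1)
  moreover have "(\<integral>u. exp (- ((t * ?h u)\<^sup>2) / 2) \<partial>?P) = 1 / (1 + a * t\<^sup>2)" for t
  proof -
    have "(\<lambda>u. exp (- ((t * ?h u)\<^sup>2) / 2)) = (\<lambda>u. exp (- (a * t\<^sup>2) * \<bar>u\<bar>))"
      by (auto simp: power_mult_distrib hsq)
    then show ?thesis using laplace_transform_exponential[of "a * t\<^sup>2"] a by simp
  qed
  ultimately show ?thesis by simp
qed

text \<open>A factor with \<open>0 \<le> b \<le> a\<close> is a mixture of the point mass at 0 and a Laplace law.\<close>
lemma cf_moment2_le_laplace_ratio:
  assumes "0 < a" "0 \<le> b" "b \<le> a"
  shows "cf_moment2_le (\<lambda>t. (1 + b * t\<^sup>2) / (1 + a * t\<^sup>2)) (2 * a)"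
proof -
  let ?q = "1 - b / a"
  have q: "0 \<le> ?q" "?q \<le> 1" using assms by (auto simp: field_simps)
  have "(1 + b * x) / (1 + a * x) = (1 - ?q) + ?q * (1 / (1 + a * x))" if "0 \<le> x" for x
  proof -
    have pos: "0 < 1 + a * x" using assms that by (simp add: add_pos_nonneg)
    have "((1 - ?q) + ?q * (1 / (1 + a * x))) * (1 + a * x) = b / a * (1 + a * x) + ?q"
      using pos by (simp add: distrib_right)
    also have "\<dots> = 1 + b * x" using assms by (simp add: field_simps)
    finally have "((1 - ?q) + ?q * (1 / (1 + a * x))) * (1 + a * x) = 1 + b * x" .
    then show ?thesis using pos by (subst divide_eq_eq) auto
  qed
  moreover have "cf_moment2_le (\<lambda>t. (1 - ?q) + ?q * (1 / (1 + a * t\<^sup>2))) (2 * a)"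
    using cf_moment2_le_bernoulli_mixture[OF cf_moment2_le_laplace[of a] q]
    by (rule cf_moment2_le_mono) (use assms q in \<open>auto simp: mult_left_le_one_le\<close>)
  ultimately show ?thesis by simp
qed

lemma cf_moment2_le_rational_prod_limit:
  assumes ab: "\<And>k. 0 < a k \<and> 0 \<le> b k \<and> b k \<le> a k"
    and sum_a: "\<And>n. (\<Sum>k<n. a k) \<le> A"
    and lim: "\<And>t. (\<lambda>n. (\<Prod>k<n. 1 + b k * t\<^sup>2) / (\<Prod>k<n. 1 + a k * t\<^sup>2)) \<longlonglongrightarrow> f t"
  shows "cf_moment2_le f (2 * A)"
proof (rule cf_moment2_le_limit[OF _ lim])
  fix n
  have "cf_moment2_le (\<lambda>t. \<Prod>k<n. (1 + b k * t\<^sup>2) / (1 + a k * t\<^sup>2)) (\<Sum>k<n. 2 * a k)"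
    using ab by (intro cf_moment2_le_prod cf_moment2_le_laplace_ratio) auto
  then have "cf_moment2_le (\<lambda>t. (\<Prod>k<n. 1 + b k * t\<^sup>2) / (\<Prod>k<n. 1 + a k * t\<^sup>2)) (2 * (\<Sum>k<n. a k))"
    by (simp add: prod_dividef sum_distrib_left)
  then show "cf_moment2_le (\<lambda>t. (\<Prod>k<n. 1 + b k * t\<^sup>2) / (\<Prod>k<n. 1 + a k * t\<^sup>2)) (2 * A)"
    by (rule cf_moment2_le_mono) (simp add: sum_a)
qed

lemma selfdecomposable_if_cf_moment2_le:
  assumes "cf_moment2_le \<phi> B" and "\<And>t. \<phi> t \<noteq> 0"
    and "\<And>c. 0 < c \<Longrightarrow> c < 1 \<Longrightarrow> \<exists>B. cf_moment2_le (\<lambda>t. \<phi> t / \<phi> (c * t)) B"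
  shows "selfdecomposable (\<lambda>t. complex_of_real (\<phi> t))"
  unfolding selfdecomposable_def
proof (intro conjI allI impI)
  show "is_char_fun (\<lambda>t. complex_of_real (\<phi> t))" by (rule is_char_fun_if_cf_moment2_le[OF assms(1)])
  fix c :: real assume "0 < c \<and> c < 1"
  then obtain B' where "cf_moment2_le (\<lambda>t. \<phi> t / \<phi> (c * t)) B'" using assms(3) by blast
  moreover have "complex_of_real (\<phi> t) = complex_of_real (\<phi> (c * t)) * complex_of_real (\<phi> t / \<phi> (c * t))" for t
  proof -
    have "\<phi> t = \<phi> (c * t) * (\<phi> t / \<phi> (c * t))" using assms(2)[of "c * t"] by simp
    then show ?thesis by (metis of_real_mult)
  qed
  ultimately show "\<exists>\<rho>. is_char_fun \<rho> \<and> (\<forall>t. complex_of_real (\<phi> t) = complex_of_real (\<phi> (c * t)) * \<rho> t)"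
    using is_char_fun_if_cf_moment2_le by blast
qed

lemma real_distribution_conv_pow:
  assumes N: "real_distribution N"
  shows "real_distribution (conv_pow N n) \<and> char (conv_pow N n) t = char N t ^ n"
proof (induction n arbitrary: t)
  case 0 then show ?case by (simp add: real_distribution_return_0 char_def integral_return)
next
  case (Suc n)
  then show ?case using real_distribution_convolution[OF N] char_convolution[OF N] by simp
qed

lemma finite_log_moment_if_moment2:
  assumes M: "real_distribution M" and int: "integrable M (\<lambda>x. x\<^sup>2)"
  shows "finite_log_moment M"
proof -
  interpret real_distribution M by fact
  have bound: "ln (1 + \<bar>x\<bar>) \<le> 1 + x\<^sup>2" for x :: real
  proof -
    have "ln (1 + \<bar>x\<bar>) \<le> \<bar>x\<bar>" by (rule ln_add_one_self_le_self) simp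
    also have "\<bar>x\<bar> \<le> 1 + x\<^sup>2"
    proof (cases "\<bar>x\<bar> \<le> 1")
      case False
      then have "\<bar>x\<bar> * 1 \<le> \<bar>x\<bar> * \<bar>x\<bar>" by (intro mult_left_mono) auto
      then show ?thesis by (simp add: power2_eq_square)
    qed (simp add: add_increasing2)
    finally show ?thesis .
  qed
  show ?thesis unfolding finite_log_moment_def
  proof (rule Bochner_Integration.integrable_bound)
    show "integrable M (\<lambda>x. 1 + x\<^sup>2)" using int by simp
    show "AE x in M. norm (ln (1 + \<bar>x\<bar>)) \<le> norm (1 + x\<^sup>2)" using bound by simp
  qed simp
qed

lemma infinitely_divisible_if_cf_powers:
  assumes powers: "\<And>s. 0 \<le> s \<Longrightarrow> \<exists>B. cf_moment2_le (\<lambda>t. exp (s * X t)) B"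
  shows "\<exists>M. real_distribution M \<and> char M = (\<lambda>t. complex_of_real (exp (X t)))
      \<and> infinitely_divisible M \<and> finite_log_moment M"
proof -
  obtain B where "cf_moment2_le (\<lambda>t. exp (1 * X t)) B" using powers[of 1] by auto
  then obtain M where M: "real_distribution M" "char M = (\<lambda>t. complex_of_real (exp (X t)))"
      "integrable M (\<lambda>x. x\<^sup>2)" unfolding cf_moment2_le_def by auto
  have "\<exists>N. real_distribution N \<and> M = conv_pow N n" if n: "1 \<le> n" for n
  proof -
    obtain B' where "cf_moment2_le (\<lambda>t. exp ((1 / real n) * X t)) B'" using powers[of "1 / real n"] by auto
    then obtain N where N: "real_distribution N" "char N = (\<lambda>t. complex_of_real (exp ((1 / real n) * X t)))"
      unfolding cf_moment2_le_def by auto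
    have "char (conv_pow N n) t = char M t" for t
    proof -
      have "char (conv_pow N n) t = complex_of_real (exp ((1 / real n) * X t) ^ n)"
        using real_distribution_conv_pow[OF N(1)] N(2) by simp
      also have "exp ((1 / real n) * X t) ^ n = exp (real n * ((1 / real n) * X t))"
        by (rule exp_of_nat_mult[symmetric])
      also have "real n * ((1 / real n) * X t) = X t" using n by simp
      finally show ?thesis using M(2) by simp
    qed
    then have "M = conv_pow N n"
      using real_distribution_conv_pow[OF N(1)] by (intro Levy_uniqueness[OF M(1)]) auto
    then show ?thesis using N(1) by blast
  qed
  then show ?thesis
    using M finite_log_moment_if_moment2 unfolding infinitely_divisible_def by blast
qed

definition sinh_coeff :: "nat \<Rightarrow> real" where
  "sinh_coeff k = 1 / (pi\<^sup>2 * (real k + 1)\<^sup>2)"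

definition cosh_coeff :: "nat \<Rightarrow> real" where
  "cosh_coeff k = 4 / (pi\<^sup>2 * (2 * real k + 1)\<^sup>2)"

definition sinh_partial_prod :: "nat \<Rightarrow> real \<Rightarrow> real" where
  "sinh_partial_prod n t = (\<Prod>k<n. 1 + sinh_coeff k * t\<^sup>2)"

definition cosh_partial_prod :: "nat \<Rightarrow> real \<Rightarrow> real" where
  "cosh_partial_prod n t = (\<Prod>k<n. 1 + cosh_coeff k * t\<^sup>2)"

lemma sinh_coeff_pos: "0 < sinh_coeff k"
  unfolding sinh_coeff_def by (simp add: add_pos_nonneg)

lemma cosh_coeff_pos: "0 < cosh_coeff k"
  unfolding cosh_coeff_def by (simp add: add_pos_nonneg)

lemma sinh_coeff_le_cosh_coeff: "sinh_coeff k \<le> cosh_coeff k"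
proof -
  have "(2 * real k + 1)\<^sup>2 \<le> 4 * (real k + 1)\<^sup>2" unfolding power2_eq_square by (simp add: algebra_simps)
  then have "4 / (pi\<^sup>2 * (4 * (real k + 1)\<^sup>2)) \<le> 4 / (pi\<^sup>2 * (2 * real k + 1)\<^sup>2)"
    by (intro divide_left_mono mult_left_mono mult_pos_pos) (auto simp: add_pos_nonneg)
  then show ?thesis unfolding sinh_coeff_def cosh_coeff_def by simp
qed

lemma cosh_coeff_le: "cosh_coeff k \<le> 4 * sinh_coeff k"
proof -
  have "(real k + 1)\<^sup>2 \<le> (2 * real k + 1)\<^sup>2" by (intro power_mono) auto
  then have "4 / (pi\<^sup>2 * (2 * real k + 1)\<^sup>2) \<le> 4 / (pi\<^sup>2 * (real k + 1)\<^sup>2)"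
    by (intro divide_left_mono mult_left_mono mult_pos_pos) (auto simp: add_pos_nonneg)
  then show ?thesis unfolding sinh_coeff_def cosh_coeff_def by simp
qed

lemma sinh_coeff_sums: "sinh_coeff sums (1 / 6)"
proof -
  have "(\<lambda>k. 1 / (real k + 1)\<^sup>2) sums (pi\<^sup>2 / 6)"
    using inverse_squares_sums by (simp add: add.commute)
  then have "(\<lambda>k. 1 / pi\<^sup>2 * (1 / (real k + 1)\<^sup>2)) sums (1 / pi\<^sup>2 * (pi\<^sup>2 / 6))"
    by (rule sums_mult)
  then show ?thesis unfolding sinh_coeff_def[abs_def] by simp
qed

lemma sum_sinh_coeff_le: "(\<Sum>k<n. sinh_coeff k) \<le> 1 / 6"
  using sum_le_suminf[of sinh_coeff "{..<n}"] sinh_coeff_sums sinh_coeff_pos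
  by (auto simp: sums_iff less_imp_le)

lemma sum_cosh_coeff_le: "(\<Sum>k<n. cosh_coeff k) \<le> 2 / 3"
proof -
  have "(\<Sum>k<n. cosh_coeff k) \<le> 4 * (\<Sum>k<n. sinh_coeff k)"
    unfolding sum_distrib_left by (intro sum_mono cosh_coeff_le)
  then show ?thesis using sum_sinh_coeff_le[of n] by simp
qed

lemma sinh_partial_prod_pos: "0 < sinh_partial_prod n t"
  unfolding sinh_partial_prod_def using sinh_coeff_pos[THEN less_imp_le]
  by (auto intro!: prod_pos add_pos_nonneg)

text \<open>The product formula for \<open>sin\<close>, evaluated at \<open>i t / \<pi>\<close>.\<close>
lemma tendsto_sinh_partial_prod:
  assumes "t \<noteq> 0"
  shows "(\<lambda>n. sinh_partial_prod n t) \<longlonglongrightarrow> sinh t / t"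
proof -
  define z where "z = \<i> * complex_of_real (t / pi)"
  have "z ^ 2 = \<i> ^ 2 * (complex_of_real (t / pi)) ^ 2" by (simp only: z_def power_mult_distrib)
  then have z2: "z ^ 2 = - complex_of_real ((t / pi)\<^sup>2)" by simp
  have factor: "1 - z ^ 2 / of_nat k ^ 2 = complex_of_real (1 + t\<^sup>2 / (pi\<^sup>2 * (real k)\<^sup>2))" for k
    unfolding z2 by (simp add: power_divide field_simps)
  have factor_Suc: "1 - z ^ 2 / of_nat (Suc k) ^ 2 = complex_of_real (1 + sinh_coeff k * t\<^sup>2)" for k
    unfolding factor[of "Suc k"] by (simp add: sinh_coeff_def add.commute)
  have "of_real pi * z = \<i> * complex_of_real t" unfolding z_def by simp
  then have "of_real pi * z * (\<Prod>k=1..n. 1 - z ^ 2 / of_nat k ^ 2)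
      = \<i> * complex_of_real (t * sinh_partial_prod n t)" for n
    unfolding One_nat_def prod.atLeast1_atMost_eq factor_Suc sinh_partial_prod_def by simp
  moreover have "sin (of_real pi * z) = \<i> * complex_of_real (sinh t)"
    unfolding z_def by (simp add: sin_i_times sinh_def exp_of_real exp_minus)
  ultimately have "(\<lambda>n. \<i> * complex_of_real (t * sinh_partial_prod n t)) \<longlonglongrightarrow> \<i> * complex_of_real (sinh t)"
    using sin_product_formula_complex[of z] by simp
  then have "(\<lambda>n. - \<i> * (\<i> * complex_of_real (t * sinh_partial_prod n t)))
      \<longlonglongrightarrow> - \<i> * (\<i> * complex_of_real (sinh t))"
    by (rule tendsto_mult[OF tendsto_const])
  moreover have "- \<i> * (\<i> * x) = x" for x :: complex by (simp add: mult.assoc[symmetric])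
  ultimately have "(\<lambda>n. complex_of_real (t * sinh_partial_prod n t)) \<longlonglongrightarrow> complex_of_real (sinh t)"
    by (simp only:)
  then have "(\<lambda>n. t * sinh_partial_prod n t) \<longlonglongrightarrow> sinh t"
    by (simp only: tendsto_of_real_iff)
  from tendsto_divide[OF this tendsto_const assms] show ?thesis
    using assms by simp
qed

lemma sinh_partial_prod_double:
  "sinh_partial_prod (2 * n) (2 * t) = cosh_partial_prod n t * sinh_partial_prod n t"
proof (induction n)
  case 0 then show ?case by (simp add: sinh_partial_prod_def cosh_partial_prod_def)
next
  case (Suc n)
  have "(real (Suc (2 * n)) + 1)\<^sup>2 = 4 * (real n + 1)\<^sup>2" by (simp add: power2_eq_square algebra_simps)
  then have coeff: "sinh_coeff (2 * n) * (2 * t)\<^sup>2 = cosh_coeff n * t\<^sup>2"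
    "sinh_coeff (Suc (2 * n)) * (2 * t)\<^sup>2 = sinh_coeff n * t\<^sup>2"
    unfolding sinh_coeff_def cosh_coeff_def by (simp_all add: power_mult_distrib)
  have "2 * Suc n = Suc (Suc (2 * n))" by simp
  then have "sinh_partial_prod (2 * Suc n) (2 * t) = sinh_partial_prod (2 * n) (2 * t)
      * ((1 + sinh_coeff (2 * n) * (2 * t)\<^sup>2) * (1 + sinh_coeff (Suc (2 * n)) * (2 * t)\<^sup>2))"
    unfolding sinh_partial_prod_def by (simp only: prod.lessThan_Suc mult.assoc)
  then show ?case
    unfolding Suc coeff by (simp add: sinh_partial_prod_def cosh_partial_prod_def mult_ac)
qed

lemma tendsto_cosh_partial_prod: "(\<lambda>n. cosh_partial_prod n t) \<longlonglongrightarrow> cosh t"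
proof (cases "t = 0")
  case True then show ?thesis by (simp add: cosh_partial_prod_def)
next
  case False
  have "(\<lambda>n. sinh_partial_prod (2 * n) (2 * t)) \<longlonglongrightarrow> sinh (2 * t) / (2 * t)"
    using LIMSEQ_subseq_LIMSEQ[OF tendsto_sinh_partial_prod[of "2 * t"], of "\<lambda>n. 2 * n"] False
    by (simp add: strict_mono_def comp_def)
  then have "(\<lambda>n. sinh_partial_prod (2 * n) (2 * t) / sinh_partial_prod n t)
      \<longlonglongrightarrow> (sinh (2 * t) / (2 * t)) / (sinh t / t)"
    by (rule tendsto_divide[OF _ tendsto_sinh_partial_prod[OF False]]) (use False in simp)
  moreover have "sinh_partial_prod (2 * n) (2 * t) / sinh_partial_prod n t = cosh_partial_prod n t" for n
    using sinh_partial_prod_pos[of n t] by (simp add: sinh_partial_prod_double)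
  moreover have "(sinh (2 * t) / (2 * t)) / (sinh t / t) = cosh t"
    using False sinh_double[of t] by (simp add: field_simps)
  ultimately show ?thesis by simp
qed

lemma cf_moment2_le_inverse_prod_limit:
  assumes a: "\<And>k. 0 < a k" and sum_a: "\<And>n. (\<Sum>k<n. a k) \<le> A"
    and lim: "\<And>t. (\<lambda>n. 1 / (\<Prod>k<n. 1 + a k * t\<^sup>2)) \<longlonglongrightarrow> \<phi> t"
  shows "cf_moment2_le \<phi> (2 * A)"
  by (rule cf_moment2_le_rational_prod_limit[where a=a and b="\<lambda>_. 0"])
     (use sum_a lim a[THEN less_imp_le] a in auto)

lemma cf_moment2_le_inverse_prod_limit_ratio:
  assumes a: "\<And>k. 0 < a k" and sum_a: "\<And>n. (\<Sum>k<n. a k) \<le> A"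
    and lim: "\<And>t. (\<lambda>n. 1 / (\<Prod>k<n. 1 + a k * t\<^sup>2)) \<longlonglongrightarrow> \<phi> t"
    and nonzero: "\<And>t. \<phi> t \<noteq> 0" and c: "0 < c" "c < 1"
  shows "cf_moment2_le (\<lambda>t. \<phi> t / \<phi> (c * t)) (2 * A)"
proof (rule cf_moment2_le_rational_prod_limit[where b="\<lambda>k. c\<^sup>2 * a k"])
  show "0 < a k \<and> 0 \<le> c\<^sup>2 * a k \<and> c\<^sup>2 * a k \<le> a k" for k
    using a[of k] c by (auto simp: power_le_one mult_left_le_one_le)
  show "(\<lambda>n. (\<Prod>k<n. 1 + c\<^sup>2 * a k * t\<^sup>2) / (\<Prod>k<n. 1 + a k * t\<^sup>2)) \<longlonglongrightarrow> \<phi> t / \<phi> (c * t)" for t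
  proof -
    have "(\<lambda>n. (1 / (\<Prod>k<n. 1 + a k * t\<^sup>2)) / (1 / (\<Prod>k<n. 1 + a k * (c * t)\<^sup>2)))
        \<longlonglongrightarrow> \<phi> t / \<phi> (c * t)"
      by (rule tendsto_divide[OF lim lim nonzero])
    then show ?thesis by (simp add: power_mult_distrib mult_ac)
  qed
qed (rule sum_a)

lemma phi_C_pos: "0 < phi_C t"
  by (simp add: phi_C_def)

lemma phi_S_pos: "0 < phi_S t"
  by (cases t "0::real" rule: linorder_cases) (auto simp: phi_S_def divide_neg_neg)

lemma phi_T_pos: "0 < phi_T t"
  by (cases t "0::real" rule: linorder_cases) (auto simp: phi_T_def divide_neg_neg)

lemma tendsto_inverse_sinh_partial_prod: "(\<lambda>n. 1 / sinh_partial_prod n t) \<longlonglongrightarrow> phi_S t"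
proof (cases "t = 0")
  case True then show ?thesis by (simp add: phi_S_def sinh_partial_prod_def)
next
  case False
  have "(\<lambda>n. 1 / sinh_partial_prod n t) \<longlonglongrightarrow> 1 / (sinh t / t)"
    by (rule tendsto_divide[OF tendsto_const tendsto_sinh_partial_prod[OF False]]) (use False in simp)
  then show ?thesis using False by (simp add: phi_S_def)
qed

lemma tendsto_inverse_cosh_partial_prod: "(\<lambda>n. 1 / cosh_partial_prod n t) \<longlonglongrightarrow> phi_C t"
  unfolding phi_C_def by (rule tendsto_divide[OF tendsto_const tendsto_cosh_partial_prod]) simp

lemma cf_moment2_le_phi_S: "cf_moment2_le phi_S (1 / 3)"
  using cf_moment2_le_inverse_prod_limit[OF sinh_coeff_pos sum_sinh_coeff_le]
    tendsto_inverse_sinh_partial_prod by (simp add: sinh_partial_prod_def)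

lemma cf_moment2_le_phi_C: "cf_moment2_le phi_C (4 / 3)"
  using cf_moment2_le_inverse_prod_limit[OF cosh_coeff_pos sum_cosh_coeff_le]
    tendsto_inverse_cosh_partial_prod by (simp add: cosh_partial_prod_def)

lemma cf_moment2_le_phi_S_ratio: "0 < c \<Longrightarrow> c < 1 \<Longrightarrow> cf_moment2_le (\<lambda>t. phi_S t / phi_S (c * t)) (1 / 3)"
  using cf_moment2_le_inverse_prod_limit_ratio[OF sinh_coeff_pos sum_sinh_coeff_le, of phi_S c]
    tendsto_inverse_sinh_partial_prod phi_S_pos by (simp add: sinh_partial_prod_def less_imp_neq[symmetric])

lemma cf_moment2_le_phi_C_ratio: "0 < c \<Longrightarrow> c < 1 \<Longrightarrow> cf_moment2_le (\<lambda>t. phi_C t / phi_C (c * t)) (4 / 3)"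
  using cf_moment2_le_inverse_prod_limit_ratio[OF cosh_coeff_pos sum_cosh_coeff_le, of phi_C c]
    tendsto_inverse_cosh_partial_prod phi_C_pos by (simp add: cosh_partial_prod_def less_imp_neq[symmetric])

lemma cf_moment2_le_phi_T: "cf_moment2_le phi_T (4 / 3)"
proof -
  have "(\<lambda>n. sinh_partial_prod n t / cosh_partial_prod n t) \<longlonglongrightarrow> phi_T t" for t
  proof (cases "t = 0")
    case True then show ?thesis by (simp add: phi_T_def sinh_partial_prod_def cosh_partial_prod_def)
  next
    case False
    have "(\<lambda>n. sinh_partial_prod n t / cosh_partial_prod n t) \<longlonglongrightarrow> (sinh t / t) / cosh t"
      by (rule tendsto_divide[OF tendsto_sinh_partial_prod[OF False] tendsto_cosh_partial_prod]) simp
    then show ?thesis using False by (simp add: phi_T_def tanh_def mult.commute)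
  qed
  then have "cf_moment2_le phi_T (2 * (2 / 3))"
    using sinh_coeff_pos cosh_coeff_pos sinh_coeff_le_cosh_coeff sum_cosh_coeff_le
    by (intro cf_moment2_le_rational_prod_limit[where a=cosh_coeff and b=sinh_coeff])
       (auto simp: sinh_partial_prod_def cosh_partial_prod_def less_imp_le)
  then show ?thesis by simp
qed

lemma deriv_eq_if_eq_off_0:
  assumes "(G has_real_derivative D) (at t)" "t \<noteq> 0" "\<And>s. s \<noteq> 0 \<Longrightarrow> g s = G s"
  shows "deriv g t = D"
proof (rule DERIV_imp_deriv)
  show "(g has_real_derivative D) (at t)"
    by (rule has_field_derivative_transform_within_open[OF assms(1), of "-{0}"]) (use assms in auto)
qed

lemma bdcf_phi_C: "bdcf phi_C t = exp (- t * tanh t)"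
proof (cases "t = 0")
  case True then show ?thesis by (simp add: bdcf_def)
next
  case False
  have "((\<lambda>s. ln (1 / cosh s)) has_real_derivative - (sinh t / cosh t)) (at t)"
    by (auto intro!: derivative_eq_intros simp: field_simps)
  then have "deriv (\<lambda>s. ln (phi_C s)) t = - (sinh t / cosh t)"
    using False by (intro deriv_eq_if_eq_off_0) (auto simp: phi_C_def)
  then show ?thesis using False by (simp add: bdcf_def tanh_def)
qed

lemma bdcf_phi_S:
  assumes t: "t \<noteq> 0"
  shows "bdcf phi_S t = exp (1 - t * (cosh t / sinh t))"
proof -
  have sh: "sinh t \<noteq> 0" using t by simp
  have "((\<lambda>s. ln (s / sinh s)) has_real_derivative
          ((1 * sinh t - t * cosh t) / (sinh t)\<^sup>2) / (t / sinh t)) (at t)"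
    using phi_S_pos[of t] t sh by (auto intro!: derivative_eq_intros simp: phi_S_def power2_eq_square)
  then have "deriv (\<lambda>s. ln (phi_S s)) t = ((1 * sinh t - t * cosh t) / (sinh t)\<^sup>2) / (t / sinh t)"
    using t by (intro deriv_eq_if_eq_off_0) (auto simp: phi_S_def)
  moreover have "t * (((1 * sinh t - t * cosh t) / (sinh t)\<^sup>2) / (t / sinh t)) = 1 - t * (cosh t / sinh t)"
    using t sh by (simp add: field_simps power2_eq_square)
  ultimately show ?thesis using t by (simp add: bdcf_def)
qed

lemma phi_S_double: "t \<noteq> 0 \<Longrightarrow> phi_S (2 * t) = t / (sinh t * cosh t)"
  using sinh_double[of t] by (simp add: phi_S_def field_simps)

lemma ln_phi_T_has_derivative:
  assumes t: "t \<noteq> 0"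
  shows "((\<lambda>s. ln (phi_T s)) has_real_derivative (phi_S (2 * t) - 1) / t) (at t)"
proof -
  have sh: "sinh t \<noteq> 0" using t by simp
  have ch: "cosh t \<noteq> 0" using cosh_real_pos[of t] by linarith
  have phi_T_eq: "phi_T s = sinh s / (s * cosh s)" if "s \<noteq> 0" for s
    using that by (simp add: phi_T_def tanh_def)
  define D where "D = ((cosh t * (t * cosh t) - sinh t * (1 * cosh t + t * sinh t)) / (t * cosh t)\<^sup>2)
      / (sinh t / (t * cosh t))"
  have "((\<lambda>s. ln (sinh s / (s * cosh s))) has_real_derivative D) (at t)"
    unfolding D_def using phi_T_pos[of t] t ch
    by (auto intro!: derivative_eq_intros simp: phi_T_eq power2_eq_square ac_simps)
  then have "((\<lambda>s. ln (phi_T s)) has_real_derivative D) (at t)"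
    by (rule has_field_derivative_transform_within_open[of _ _ _ "-{0}"]) (use t phi_T_eq in auto)
  moreover have "D = (phi_S (2 * t) - 1) / t"
  proof -
    have "cosh t * (t * cosh t) - sinh t * (1 * cosh t + t * sinh t) = t - sinh t * cosh t"
      using cosh_square_eq[of t] by (simp add: power2_eq_square algebra_simps)
    then have "D = ((t - sinh t * cosh t) / (t * cosh t)\<^sup>2) / (sinh t / (t * cosh t))"
      unfolding D_def by simp
    also have "\<dots> = (t / (sinh t * cosh t) - 1) / t"
      using t sh ch by (simp add: field_simps power2_eq_square)
    finally show ?thesis unfolding phi_S_double[OF t] .
  qed
  ultimately show ?thesis by simp
qed

lemma bdcf_phi_T: "bdcf phi_T t = exp (phi_S (2 * t) - 1)"
proof (cases "t = 0")
  case True then show ?thesis by (simp add: bdcf_def phi_S_def)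
next
  case False
  then show ?thesis
    using DERIV_imp_deriv[OF ln_phi_T_has_derivative[OF False]] by (simp add: bdcf_def)
qed

lemma bdcf_phi_C_eq_mult: "bdcf phi_C t = bdcf phi_S t * bdcf phi_T t"
proof (cases "t = 0")
  case True then show ?thesis by (simp add: bdcf_def)
next
  case False
  have sh: "sinh t \<noteq> 0" using False by simp
  have ch: "cosh t \<noteq> 0" using cosh_real_pos[of t] by linarith
  have "- t * tanh t = (1 - t * (cosh t / sinh t)) + (t / (sinh t * cosh t) - 1)"
  proof -
    have "(1 - t * (cosh t / sinh t)) + (t / (sinh t * cosh t) - 1)
        = t * (1 - cosh t * cosh t) / (sinh t * cosh t)"
      using sh ch by (simp add: field_simps)
    also have "\<dots> = - t * tanh t"
      using sh ch cosh_square_eq[of t] by (simp add: tanh_def power2_eq_square field_simps)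
    finally show ?thesis by simp
  qed
  then show ?thesis
    using False by (simp add: bdcf_phi_C bdcf_phi_S bdcf_phi_T phi_S_double exp_add[symmetric])
qed

lemma ln_phi_T_diff_has_integral:
  assumes c: "0 < c" "c \<le> 1"
  shows "((\<lambda>u. (phi_S (2 * (u * t)) - 1) / u) has_integral (ln (phi_T t) - ln (phi_T (c * t)))) {c..1}"
proof (cases "t = 0")
  case True then show ?thesis by (simp add: phi_S_def phi_T_def)
next
  case t: False
  have "((\<lambda>u. ln (phi_T (u * t))) has_vector_derivative (phi_S (2 * (x * t)) - 1) / x) (at x within {c..1})"
    if x: "x \<in> {c..1}" for x
  proof -
    have "x * t \<noteq> 0" "0 < x" using x c t by auto
    have "((\<lambda>u. u * t) has_real_derivative t) (at x)" by (auto intro!: derivative_eq_intros)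
    from DERIV_chain2[where f="\<lambda>s. ln (phi_T s)" and g="\<lambda>u. u * t",
        OF ln_phi_T_has_derivative[OF \<open>x * t \<noteq> 0\<close>] this]
    have "((\<lambda>u. ln (phi_T (u * t))) has_real_derivative (phi_S (2 * (x * t)) - 1) / (x * t) * t) (at x)"
      by simp
    then show ?thesis using \<open>0 < x\<close> t
      by (simp add: has_real_derivative_iff_has_vector_derivative has_vector_derivative_at_within)
  qed
  from fundamental_theorem_of_calculus[OF c(2) this] show ?thesis by simp
qed

lemma has_integral_inverse:
  fixes a b :: real
  assumes "0 < a" "a \<le> b"
  shows "((\<lambda>u. 1 / u) has_integral (ln b - ln a)) {a..b}"
proof -
  have "(ln has_vector_derivative 1 / x) (at x within {a..b})" if "x \<in> {a..b}" for x
  proof -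
    have "(ln has_real_derivative 1 / x) (at x)" using that assms by (auto intro: DERIV_ln_divide)
    then show ?thesis
      by (simp add: has_real_derivative_iff_has_vector_derivative has_vector_derivative_at_within)
  qed
  from fundamental_theorem_of_calculus[OF assms(2) this] show ?thesis .
qed

lemma log_uniform_distribution:
  fixes c :: real
  assumes c: "0 < c" "c < 1"
  defines "P \<equiv> density lborel (\<lambda>u. indicator {c..1} u * (1 / (- ln c * u)))"
  shows "prob_space P"
    and "continuous_on UNIV g \<Longrightarrow> integrable P g"
    and "continuous_on UNIV g \<Longrightarrow> (\<integral>u. g u \<partial>P) = integral {c..1} (\<lambda>u. g u / (- ln c * u))"
proof -
  define w where "w u = indicator {c..1} u * (1 / (- ln c * u))" for u :: real
  have l: "ln c < 0" using c by simp
  have set_int: "integrable lborel (\<lambda>u. indicator {c..1} u * k u)"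
    "(\<integral>u. indicator {c..1} u * k u \<partial>lborel) = integral {c..1} k"
    if "continuous_on {c..1} k" for k :: "real \<Rightarrow> real"
    using borel_integrable_atLeastAtMost'[OF that] set_borel_integral_eq_integral(2)[of "{c..1}" k]
    by (simp_all add: set_integrable_def set_lebesgue_integral_def)
  have cont_w: "continuous_on {c..1} (\<lambda>u. h u / (- ln c * u))" if "continuous_on UNIV h" for h
    using c that by (intro continuous_intros continuous_on_subset[OF that]) auto
  have w_nonneg: "0 \<le> w u" for u
    using c l by (auto simp: w_def indicator_def intro!: mult_nonpos_nonneg)
  have w_int: "integrable lborel w" "(\<integral>u. w u \<partial>lborel) = 1"
  proof -
    have "((\<lambda>u. 1 / (- ln c) * (1 / u)) has_integral (1 / (- ln c) * (ln 1 - ln c))) {c..1}"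
      using c by (intro has_integral_mult_right has_integral_inverse) auto
    then have "((\<lambda>u. 1 / (- ln c * u)) has_integral 1) {c..1}" using l by simp
    then have "integral {c..1} (\<lambda>u. 1 / (- ln c * u)) = 1" by (rule integral_unique)
    then show "integrable lborel w" "(\<integral>u. w u \<partial>lborel) = 1"
      using set_int[OF cont_w[of "\<lambda>_. 1"]] by (simp_all add: w_def[abs_def])
  qed
  have [measurable]: "w \<in> borel_measurable borel" using w_int(1) by (simp add: borel_measurable_integrable)
  have P: "P = density lborel w" unfolding P_def w_def by simp
  show "prob_space P"
    using nn_integral_eq_integral[OF w_int(1)] w_nonneg w_int(2)
    by (intro prob_spaceI) (simp add: P emeasure_density)
  assume g: "continuous_on UNIV g"
  then have [measurable]: "g \<in> borel_measurable borel" by (rule borel_measurable_continuous_onI)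
  have "(\<lambda>u. w u *\<^sub>R g u) = (\<lambda>u. indicator {c..1} u * (g u / (- ln c * u)))"
    by (auto simp: w_def indicator_def)
  then show "integrable P g" "(\<integral>u. g u \<partial>P) = integral {c..1} (\<lambda>u. g u / (- ln c * u))"
    using set_int[OF cont_w[OF g]] w_nonneg
    by (simp_all add: P integrable_density integral_density)
qed

text \<open>\<open>\<phi>\<^sub>T(t)/\<phi>\<^sub>T(ct) = exp (- ln c \<cdot> (\<integral> \<phi>\<^sub>S(2ut) dP(u) - 1))\<close> for the log-uniform law \<open>P\<close>
  on \<open>[c, 1]\<close>, a compound Poisson characteristic function.\<close>
lemma cf_moment2_le_phi_T_ratio:
  assumes c: "0 < c" "c < 1"
  shows "\<exists>B. cf_moment2_le (\<lambda>t. phi_T t / phi_T (c * t)) B"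
proof -
  define l where "l = - ln c"
  have l: "0 < l" unfolding l_def using c by simp
  define P where "P = density lborel (\<lambda>u. indicator {c..1} u * (1 / (- ln c * u)))"
  note P = log_uniform_distribution[OF c, folded P_def]
  have cont_phi_S: "continuous_on UNIV phi_S"
    using isCont_if_cf_moment2_le[OF cf_moment2_le_phi_S] by (simp add: continuous_at_imp_continuous_on)
  have cont: "continuous_on UNIV (\<lambda>u. phi_S (t * (2 * u)))" for t
    by (intro continuous_on_compose2[OF cont_phi_S] continuous_intros) auto
  have "integrable P (\<lambda>u. (2 * u)\<^sup>2)" by (rule P(2)) (intro continuous_intros)
  moreover have "(\<lambda>u. 2 * u) \<in> borel_measurable P" by (simp add: P_def)
  ultimately have "cf_moment2_le (\<lambda>t. \<integral>u. phi_S (t * (2 * u)) \<partial>P) (1 / 3 * (\<integral>u. (2 * u)\<^sup>2 \<partial>P))"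
    by (intro cf_moment2_le_scale_mixture[OF cf_moment2_le_phi_S P(1)])
  from cf_moment2_le_compound_poisson[OF this less_imp_le[OF l]]
  obtain B where B: "cf_moment2_le (\<lambda>t. exp (l * ((\<integral>u. phi_S (t * (2 * u)) \<partial>P) - 1))) B" ..
  have "l * ((\<integral>u. phi_S (t * (2 * u)) \<partial>P) - 1) = ln (phi_T t) - ln (phi_T (c * t))" for t
  proof -
    have "((\<lambda>u. (phi_S (2 * (u * t)) - 1) / u + 1 / u) has_integral
        (ln (phi_T t) - ln (phi_T (c * t)) + l)) {c..1}"
      using c has_integral_inverse[of c 1] unfolding l_def
      by (intro has_integral_add ln_phi_T_diff_has_integral) auto
    then have "((\<lambda>u. 1 / l * ((phi_S (2 * (u * t)) - 1) / u + 1 / u)) has_integral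
        (1 / l * (ln (phi_T t) - ln (phi_T (c * t)) + l))) {c..1}"
      by (rule has_integral_mult_right)
    moreover have "(\<lambda>u. 1 / l * ((phi_S (2 * (u * t)) - 1) / u + 1 / u)) = (\<lambda>u. phi_S (t * (2 * u)) / (- ln c * u))"
      by (auto simp: l_def field_simps diff_divide_distrib add_divide_distrib mult_ac)
    ultimately have "((\<lambda>u. phi_S (t * (2 * u)) / (- ln c * u)) has_integral
        (1 / l * (ln (phi_T t) - ln (phi_T (c * t)) + l))) {c..1}"
      by (simp only:)
    then have "integral {c..1} (\<lambda>u. phi_S (t * (2 * u)) / (- ln c * u))
        = 1 / l * (ln (phi_T t) - ln (phi_T (c * t)) + l)"
      by (rule integral_unique)
    then show ?thesis unfolding P(3)[OF cont] using l by (simp add: field_simps)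
  qed
  with B show ?thesis using phi_T_pos by (auto simp: exp_diff)
qed

lemma sums_ln_sinh_factors: "(\<lambda>k. ln (1 + sinh_coeff k * s\<^sup>2)) sums (- ln (phi_S s))"
proof -
  have "(\<lambda>n. 1 / (1 / sinh_partial_prod n s)) \<longlonglongrightarrow> 1 / phi_S s"
    using phi_S_pos[of s] by (intro tendsto_divide tendsto_const tendsto_inverse_sinh_partial_prod) auto
  then have "(\<lambda>n. ln (sinh_partial_prod n s)) \<longlonglongrightarrow> ln (1 / phi_S s)"
    using phi_S_pos[of s] by (intro tendsto_ln) auto
  moreover have "ln (sinh_partial_prod n s) = (\<Sum>k<n. ln (1 + sinh_coeff k * s\<^sup>2))" for n
  proof -
    have "0 < 1 + sinh_coeff k * s\<^sup>2" for k
      using sinh_coeff_pos[of k] by (intro add_pos_nonneg) auto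
    then show ?thesis unfolding sinh_partial_prod_def by (intro ln_prod) (auto simp: less_imp_neq[symmetric])
  qed
  ultimately show ?thesis using phi_S_pos[of s] by (simp add: sums_def ln_div)
qed

lemma ln_one_plus_sq_has_derivative:
  fixes a :: real
  assumes "0 \<le> a"
  shows "((\<lambda>s. ln (1 + a * s\<^sup>2)) has_real_derivative 2 * a * s / (1 + a * s\<^sup>2)) (at s within S)"
proof -
  have "0 < 1 + a * s\<^sup>2" using assms by (intro add_pos_nonneg) auto
  then show ?thesis by (auto intro!: derivative_eq_intros simp: field_simps power2_eq_square)
qed

lemma ln_one_plus_sq_deriv_bound:
  fixes a :: real
  assumes "0 \<le> a" "\<bar>s\<bar> \<le> R"
  shows "\<bar>2 * a * s / (1 + a * s\<^sup>2)\<bar> \<le> 2 * R * a"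
proof -
  have d: "1 \<le> 1 + a * s\<^sup>2" using assms by simp
  then have "\<bar>2 * a * s / (1 + a * s\<^sup>2)\<bar> = 2 * a * \<bar>s\<bar> / (1 + a * s\<^sup>2)"
    using assms by (simp add: abs_mult)
  also have "\<dots> \<le> 2 * a * \<bar>s\<bar> / 1"
    using d assms by (intro divide_left_mono) (auto simp: add_pos_nonneg)
  also have "\<dots> \<le> 2 * R * a" using mult_left_mono[OF assms(2) assms(1)] by (simp add: algebra_simps)
  finally show ?thesis .
qed

lemma summable_sinh_log_derivs: "summable (\<lambda>k. 2 * sinh_coeff k * t / (1 + sinh_coeff k * t\<^sup>2))"
proof (rule summable_comparison_test'[where N=0])
  show "summable (\<lambda>k. 2 * \<bar>t\<bar> * sinh_coeff k)"
    by (intro summable_mult sums_summable[OF sinh_coeff_sums])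
  show "norm (2 * sinh_coeff k * t / (1 + sinh_coeff k * t\<^sup>2)) \<le> 2 * \<bar>t\<bar> * sinh_coeff k" for k
    unfolding real_norm_def using sinh_coeff_pos[of k] by (intro ln_one_plus_sq_deriv_bound) auto
qed

lemma suminf_ln_sinh_factors_has_derivative:
  "((\<lambda>s. \<Sum>k. ln (1 + sinh_coeff k * s\<^sup>2)) has_real_derivative
      (\<Sum>k. 2 * sinh_coeff k * t / (1 + sinh_coeff k * t\<^sup>2))) (at t)"
proof -
  define R where "R = \<bar>t\<bar> + 1"
  have uc: "uniformly_convergent_on {-R<..<R} (\<lambda>n s. \<Sum>k<n. 2 * sinh_coeff k * s / (1 + sinh_coeff k * s\<^sup>2))"
  proof (rule Weierstrass_m_test')
    show "norm (2 * sinh_coeff k * s / (1 + sinh_coeff k * s\<^sup>2)) \<le> 2 * R * sinh_coeff k"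
      if "s \<in> {-R<..<R}" for k s
      unfolding real_norm_def using that sinh_coeff_pos[of k] by (intro ln_one_plus_sq_deriv_bound) auto
    show "summable (\<lambda>k. 2 * R * sinh_coeff k)"
      by (intro summable_mult sums_summable[OF sinh_coeff_sums])
  qed
  have deriv: "((\<lambda>s. ln (1 + sinh_coeff k * s\<^sup>2)) has_real_derivative
      2 * sinh_coeff k * s / (1 + sinh_coeff k * s\<^sup>2)) (at s within {-R<..<R})" for k s
    using sinh_coeff_pos[of k] by (intro ln_one_plus_sq_has_derivative) simp
  have "t \<in> interior {-R<..<R}" "(0::real) \<in> {-R<..<R}" unfolding R_def by auto
  moreover have "summable (\<lambda>k. ln (1 + sinh_coeff k * 0\<^sup>2))" by simp
  ultimately show ?thesis
    using has_field_derivative_series'(2)[where f="\<lambda>k s. ln (1 + sinh_coeff k * s\<^sup>2)"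
        and f'="\<lambda>k s. 2 * sinh_coeff k * s / (1 + sinh_coeff k * s\<^sup>2)",
        OF convex_real_interval(8) deriv uc] by blast
qed

definition ln_psi_S :: "real \<Rightarrow> real" where
  "ln_psi_S t = (\<Sum>k. 2 * (1 / (1 + sinh_coeff k * t\<^sup>2) - 1))"

lemma bdcf_phi_S_eq_exp_ln_psi_S: "bdcf phi_S t = exp (ln_psi_S t)"
proof (cases "t = 0")
  case True then show ?thesis by (simp add: bdcf_def ln_psi_S_def)
next
  case False
  have "(\<lambda>s. ln (phi_S s)) = (\<lambda>s. - (\<Sum>k. ln (1 + sinh_coeff k * s\<^sup>2)))"
    using sums_ln_sinh_factors by (simp add: sums_iff)
  then have "deriv (\<lambda>s. ln (phi_S s)) t = - (\<Sum>k. 2 * sinh_coeff k * t / (1 + sinh_coeff k * t\<^sup>2))"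
    by (auto intro!: DERIV_imp_deriv derivative_intros suminf_ln_sinh_factors_has_derivative)
  also have "t * \<dots> = (\<Sum>k. - t * (2 * sinh_coeff k * t / (1 + sinh_coeff k * t\<^sup>2)))"
    using suminf_mult[OF summable_sinh_log_derivs, of "- t"] by simp
  also have "\<dots> = ln_psi_S t"
  proof -
    have "- t * (2 * a * t / d) = 2 * (1 / d - 1)" if "d = 1 + a * t\<^sup>2" "d \<noteq> 0" for a d :: real
      using that by (simp add: field_simps power2_eq_square)
    moreover have "1 + sinh_coeff k * t\<^sup>2 \<noteq> 0" for k
      using sinh_coeff_pos[of k] by (intro add_pos_nonneg[THEN less_imp_neq[symmetric]]) auto
    ultimately show ?thesis unfolding ln_psi_S_def by simp
  qed
  finally show ?thesis using False by (simp add: bdcf_def)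
qed

lemma cf_moment2_le_psi_T_power:
  assumes "0 \<le> s"
  shows "cf_moment2_le (\<lambda>t. exp (s * (phi_S (2 * t) - 1))) (s * (4 / 3))"
  using cf_moment2_le_compound_poisson[OF cf_moment2_le_scale[OF cf_moment2_le_phi_S, of 2] assms]
  by simp

lemma cf_moment2_le_psi_S_power:
  assumes s: "0 \<le> s"
  shows "cf_moment2_le (\<lambda>t. exp (s * ln_psi_S t)) (2 * s / 3)"
proof (rule cf_moment2_le_limit)
  let ?term = "\<lambda>k t. 2 * (1 / (1 + sinh_coeff k * t\<^sup>2) - 1)"
  show "cf_moment2_le (\<lambda>t. \<Prod>k<n. exp (2 * s * (1 / (1 + sinh_coeff k * t\<^sup>2) - 1))) (2 * s / 3)" for n
  proof (rule cf_moment2_le_mono)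
    show "cf_moment2_le (\<lambda>t. \<Prod>k<n. exp (2 * s * (1 / (1 + sinh_coeff k * t\<^sup>2) - 1)))
        (\<Sum>k<n. 2 * s * (2 * sinh_coeff k))"
      using s sinh_coeff_pos[THEN less_imp_le]
      by (intro cf_moment2_le_prod cf_moment2_le_compound_poisson cf_moment2_le_laplace) auto
    have "(\<Sum>k<n. 2 * s * (2 * sinh_coeff k)) = 4 * s * (\<Sum>k<n. sinh_coeff k)"
      by (simp only: sum_distrib_left) (simp add: mult_ac)
    also have "\<dots> \<le> 4 * s * (1 / 6)" using s by (intro mult_left_mono sum_sinh_coeff_le) simp
    finally show "(\<Sum>k<n. 2 * s * (2 * sinh_coeff k)) \<le> 2 * s / 3" by simp
  qed
  show "(\<lambda>n. \<Prod>k<n. exp (2 * s * (1 / (1 + sinh_coeff k * t\<^sup>2) - 1))) \<longlonglongrightarrow> exp (s * ln_psi_S t)" for t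
  proof -
    have "summable (\<lambda>k. ?term k t)"
    proof (rule summable_comparison_test'[where N=0])
      show "summable (\<lambda>k. 2 * t\<^sup>2 * sinh_coeff k)"
        by (intro summable_mult sums_summable[OF sinh_coeff_sums])
      have bound: "norm (2 * (1 / (1 + x) - 1)) \<le> 2 * x" if "0 \<le> x" for x :: real
      proof -
        have pos: "0 < 1 + x" using that by simp
        have "1 / (1 + x) - 1 = - (x / (1 + x))" using pos by (simp add: field_simps)
        moreover have "x / (1 + x) \<le> x" using that pos by (simp add: divide_le_eq algebra_simps)
        ultimately show ?thesis using that pos by simp
      qed
      have "0 \<le> sinh_coeff k * t\<^sup>2" for k
        using sinh_coeff_pos[of k] by simp
      from bound[OF this] show "norm (?term k t) \<le> 2 * t\<^sup>2 * sinh_coeff k" for k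
        by (simp add: mult_ac)
    qed
    then have "(\<lambda>n. exp (s * (\<Sum>k<n. ?term k t))) \<longlonglongrightarrow> exp (s * ln_psi_S t)"
      unfolding ln_psi_S_def by (intro tendsto_intros summable_LIMSEQ)
    moreover have "exp (s * (\<Sum>k<n. ?term k t)) = (\<Prod>k<n. exp (2 * s * (1 / (1 + sinh_coeff k * t\<^sup>2) - 1)))" for n
      by (simp add: sum_distrib_left exp_sum mult_ac)
    ultimately show ?thesis by simp
  qed
qed

lemma cf_moment2_le_psi_C_power:
  assumes "0 \<le> s"
  shows "cf_moment2_le (\<lambda>t. exp (s * (ln_psi_S t + (phi_S (2 * t) - 1)))) (2 * s / 3 + s * (4 / 3))"
  using cf_moment2_le_mult[OF cf_moment2_le_psi_S_power[OF assms] cf_moment2_le_psi_T_power[OF assms]]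
  by (simp add: distrib_left exp_add)

theorem corollary1:
  shows "selfdecomposable (\<lambda>t. complex_of_real (phi_C t))
       \<and> selfdecomposable (\<lambda>t. complex_of_real (phi_S t))
       \<and> selfdecomposable (\<lambda>t. complex_of_real (phi_T t))
       \<and> (\<forall>t::real. t \<noteq> 0 \<longrightarrow>
            bdcf phi_C t = exp (- t * tanh t)
          \<and> bdcf phi_S t = exp (1 - t * (cosh t / sinh t))
          \<and> bdcf phi_T t = exp ((1 / cosh t) * (t / sinh t) - 1)
          \<and> bdcf phi_T t = exp (2 * t / sinh (2 * t) - 1))
       \<and> (\<forall>t::real. bdcf phi_C t = bdcf phi_S t * bdcf phi_T t)
       \<and> (\<forall>\<phi>\<in>{phi_C, phi_S, phi_T}. \<exists>M. real_distribution M
            \<and> char M = (\<lambda>t. complex_of_real (bdcf \<phi> t))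
            \<and> infinitely_divisible M \<and> finite_log_moment M)"
proof -
  have sd: "selfdecomposable (\<lambda>t. complex_of_real (phi_C t))"
    "selfdecomposable (\<lambda>t. complex_of_real (phi_S t))"
    "selfdecomposable (\<lambda>t. complex_of_real (phi_T t))"
    using cf_moment2_le_phi_C_ratio cf_moment2_le_phi_S_ratio cf_moment2_le_phi_T_ratio
      phi_C_pos phi_S_pos phi_T_pos
    by (auto intro!: selfdecomposable_if_cf_moment2_le[OF cf_moment2_le_phi_C]
        selfdecomposable_if_cf_moment2_le[OF cf_moment2_le_phi_S]
        selfdecomposable_if_cf_moment2_le[OF cf_moment2_le_phi_T] simp: less_imp_neq[symmetric])
  have "bdcf phi_C = (\<lambda>t. exp (ln_psi_S t + (phi_S (2 * t) - 1)))"
    "bdcf phi_S = (\<lambda>t. exp (ln_psi_S t))" "bdcf phi_T = (\<lambda>t. exp (phi_S (2 * t) - 1))"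
    by (simp_all add: fun_eq_iff bdcf_phi_S_eq_exp_ln_psi_S bdcf_phi_T bdcf_phi_C_eq_mult exp_add)
  then have laws: "\<exists>M. real_distribution M \<and> char M = (\<lambda>t. complex_of_real (bdcf \<phi> t))
      \<and> infinitely_divisible M \<and> finite_log_moment M" if "\<phi> \<in> {phi_C, phi_S, phi_T}" for \<phi>
    using that cf_moment2_le_psi_C_power cf_moment2_le_psi_S_power cf_moment2_le_psi_T_power
    by (auto intro!: infinitely_divisible_if_cf_powers) blast+
  have "bdcf phi_T t = exp ((1 / cosh t) * (t / sinh t) - 1)" if "t \<noteq> 0" for t
    using that by (simp add: bdcf_phi_T phi_S_double)
  moreover have "bdcf phi_T t = exp (2 * t / sinh (2 * t) - 1)" if "t \<noteq> 0" for t
    using that by (simp add: bdcf_phi_T phi_S_def)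
  ultimately show ?thesis
    using sd laws bdcf_phi_C bdcf_phi_S bdcf_phi_C_eq_mult by auto
qed

end
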